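(* In the social learning model, suppose the left tail of $G_-$ is convex and differentiable. Then the map $u_+(x)=x+D_+(x)$ is monotone increasing on $(x_1,\infty)$ for some $x_1\in\mathbb{R}$.
   Context: Social learning model. A state $\theta\in\{-1,+1\}$ is drawn with $\mathbb{P}(\theta=+1)=\mathbb{P}(\theta=-1)=1/2$. Agents $t=1,2,\dots$ receive private signals $s_t\in\mathbb{R}$ that are i.i.d. conditionally on $\theta$, with CDF $F_+$ if $\theta=+1$ and $F_-$ if $\theta=-1$; $F_+$ and $F_-$ are mutually absolutely continuous. Let $L_t=\log\frac{\mathbb{P}(\theta=+1\mid s_t)}{\mathbb{P}(\theta=-1\mid s_t)}$ be the private log-likelihood ratio, and let $G_+$, $G_-$ denote the CDFs of $L_t$ conditional on $\theta=+1$, $\theta=-1$ respectively. Signals are assumed unbounded: for every $M\in\mathbb{R}$, $\mathbb{P}(L_t>M)>0$ and $\mathbb{P}(L_t<-M)>0$. Agent $t$ observes $a_1,\dots,a_{t-1}$ and her own signal and chooses $a_t\in\{-1,+1\}$ (utility $1$ if $a_t=\theta$, else $0$). The public belief is $\mu_t=\mathbb{P}(\theta=+1\mid a_1,\dots,a_{t-1})$ and $\ell_t=\log\frac{\mu_t}{1-\mu_t}$ (so $\ell_1=0$). In equilibrium $a_t=+1$ iff $\ell_t+L_t>0$, and otherwise $a_t=-1$. Consequently $\ell_{t+1}=\ell_t+D_+(\ell_t)$ if $a_t=+1$ and $\ell_{t+1}=\ell_t+D_-(\ell_t)$ if $a_t=-1$, where $D_+(x)=\log\frac{1-G_+(-x)}{1-G_-(-x)}$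 and $D_-(x)=\log\frac{G_+(-x)}{G_-(-x)}$. We write $\mathbb{P}_+(\cdot)=\mathbb{P}(\cdot\mid\theta=+1)$ and $\mathbb{E}_+$ for the corresponding expectation. "The left tail of $G_-$ is convex and differentiable" means: there exists $x_0\in\mathbb{R}$ such that the restriction of $G_-$ to $(-\infty,x_0)$ is convex and differentiable. *)

theory Defs
  imports "HOL-Probability.Probability"
begin

text \<open>Signal distributions: Fp is the law of the signal s given theta = +1 (CDF F_+),
  Fm the law given theta = -1 (CDF F_-); both Borel probability measures on the reals.
  With the uniform prior, the private log-likelihood ratio of a signal s is
  L(s) = log (dF_+/dF_-)(s), the Radon-Nikodym derivative of Fp w.r.t. Fm.\<close>

definition priv_llr :: "real measure \<Rightarrow> real measure \<Rightarrow> real \<Rightarrow> real" where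
  "priv_llr Fp Fm s = ln (enn2real (RN_deriv Fm Fp s))"

definition Gplus :: "real measure \<Rightarrow> real measure \<Rightarrow> real \<Rightarrow> real" where
  "Gplus Fp Fm x = measure Fp {s \<in> space Fp. priv_llr Fp Fm s \<le> x}"

definition Gminus :: "real measure \<Rightarrow> real measure \<Rightarrow> real \<Rightarrow> real" where
  "Gminus Fp Fm x = measure Fm {s \<in> space Fm. priv_llr Fp Fm s \<le> x}"

definition Dplus :: "real measure \<Rightarrow> real measure \<Rightarrow> real \<Rightarrow> real" where
  "Dplus Fp Fm x = ln ((1 - Gplus Fp Fm (-x)) / (1 - Gminus Fp Fm (-x)))"

definition Dminus :: "real measure \<Rightarrow> real measure \<Rightarrow> real \<Rightarrow> real" where
  "Dminus Fp Fm x = ln (Gplus Fp Fm (-x) / Gminus Fp Fm (-x))"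

definition sig_prob :: "real measure \<Rightarrow> real measure \<Rightarrow> real set \<Rightarrow> real" where
  "sig_prob Fp Fm A = (measure Fp A + measure Fm A) / 2"

definition unbounded_signals :: "real measure \<Rightarrow> real measure \<Rightarrow> bool" where
  "unbounded_signals Fp Fm \<longleftrightarrow>
     (\<forall>M::real. sig_prob Fp Fm {s. priv_llr Fp Fm s > M} > 0 \<and>
                sig_prob Fp Fm {s. priv_llr Fp Fm s < -M} > 0)"

end

theory Submission
  imports Defs
begin

text \<open>Convexity of the left tail of \<open>G\<^sub>-\<close> bounds its increments by the chord slope towards a fixed
  point \<open>z\<close>, and far to the left that slope is at most \<open>1 - G\<^sub>-(z) \<le> 1 - G\<^sub>-(y)\<close>. Hence
  \<open>1 - G\<^sub>-\<close> decreases at most exponentially with rate 1 there, i.e. \<open>y + ln (1 - G\<^sub>-(y))\<close> is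
  eventually nondecreasing as \<open>y \<rightarrow> -\<infinity>\<close>. Since \<open>x + D\<^sub>+(x) = ln (1 - G\<^sub>+(-x)) - (-x + ln (1 - G\<^sub>-(-x)))\<close>
  and \<open>G\<^sub>+\<close> is monotone, this gives the claim; unbounded signals keep the logarithms finite.\<close>

lemma convex_survival_log_mono:
  fixes Q :: "real \<Rightarrow> real"
  assumes convex: "convex_on {..<x0} Q" and "mono Q"
    and nonneg: "\<And>x. 0 \<le> Q x" and lt_one: "\<And>x. Q x < 1"
  shows "\<exists>x1. mono_on {..<x1} (\<lambda>y. y + ln (1 - Q y))"
proof -
  define z where "z = x0 - 1"
  define c where "c = 1 - Q z"
  have "c > 0" using lt_one by (simp add: c_def)
  show ?thesis
  proof (intro exI[of _ "z - 1/c"] mono_onI)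
    fix y1 y2 assume "y1 \<in> {..<z - 1/c}" "y2 \<in> {..<z - 1/c}" "y1 \<le> y2"
    then have y12: "y1 \<le> y2" and far: "1/c < z - y2" by auto
    with \<open>c > 0\<close> have "y2 < z" by (smt (verit) zero_less_divide_1_iff)
    have "convex_on {y1..z} Q"
      by (rule convex_on_subset[OF convex]) (auto simp: z_def)
    then have "Q y2 - Q y1 \<le> (Q z - Q y1) / (z - y1) * (y2 - y1)"
      using y12 \<open>y2 < z\<close> by (smt (verit) convex_onD_Icc' atLeastAtMost_iff)
    also have "\<dots> \<le> c * (y2 - y1)"
    proof (intro mult_right_mono)
      have "Q z - Q y1 \<le> 1" using nonneg[of y1] lt_one[of z] by simp
      also have "1 < c * (z - y2)"
        using far \<open>c > 0\<close> by (simp add: field_simps)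
      also have "\<dots> \<le> c * (z - y1)"
        using y12 \<open>c > 0\<close> by simp
      finally show "(Q z - Q y1) / (z - y1) \<le> c"
        using y12 \<open>y2 < z\<close> by (simp add: divide_le_eq)
    qed (use y12 in simp)
    also have "\<dots> \<le> (1 - Q y2) * (y2 - y1)"
      using \<open>mono Q\<close> \<open>y2 < z\<close> y12 by (intro mult_right_mono) (simp_all add: c_def monoD)
    finally have "1 - Q y1 \<le> (1 - Q y2) * (1 + (y2 - y1))"
      by (simp add: algebra_simps)
    also have "\<dots> \<le> (1 - Q y2) * exp (y2 - y1)"
      using lt_one[of y2] exp_ge_add_one_self[of "y2 - y1"] by (intro mult_left_mono) auto
    finally have "ln (1 - Q y1) \<le> ln ((1 - Q y2) * exp (y2 - y1))"
      using lt_one[of y1] by simp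
    then show "y1 + ln (1 - Q y1) \<le> y2 + ln (1 - Q y2)"
      using lt_one[of y2] by (simp add: ln_mult)
  qed
qed

lemma priv_llr_borel_measurable:
  assumes "sets M = sets borel" and "sets Fm = sets borel"
  shows "priv_llr Fp Fm \<in> borel_measurable M"
proof -
  have "RN_deriv Fm Fp \<in> borel_measurable M"
    using borel_measurable_RN_deriv[of Fm Fp] measurable_cong_sets[of Fm M] assms by simp
  then show ?thesis unfolding priv_llr_def[abs_def] by measurable
qed

lemma (in finite_measure) mono_measure_sublevel:
  fixes f :: "'a \<Rightarrow> real"
  assumes "f \<in> borel_measurable M"
  shows "mono (\<lambda>x. measure M {s \<in> space M. f s \<le> x})"
  using pred_le_const[OF assms atMost_borel] by (intro monoI finite_measure_mono) (auto simp: pred_def)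

lemma (in prob_space) measure_sublevel_lt_one:
  fixes f :: "'a \<Rightarrow> real"
  assumes "f \<in> borel_measurable M" and "measure M {s \<in> space M. x < f s} > 0"
  shows "measure M {s \<in> space M. f s \<le> x} < 1"
proof -
  have "{s \<in> space M. f s \<le> x} \<in> sets M"
    using pred_le_const[OF assms(1) atMost_borel] by (simp add: pred_def)
  moreover have "space M - {s \<in> space M. f s \<le> x} = {s \<in> space M. x < f s}"
    by auto
  ultimately have "1 - measure M {s \<in> space M. f s \<le> x} = measure M {s \<in> space M. x < f s}"
    using prob_compl by metis
  with assms(2) show ?thesis by simp
qed

lemma (in finite_measure) measure_null_absolutely_continuous:
  assumes "absolutely_continuous M N" and "A \<in> sets M" and "measure M A = 0"
  shows "measure N A = 0"
proof -
  have "A \<in> null_sets M" using assms(2,3) by (simp add: null_sets_def emeasure_eq_measure)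
  with assms(1) have "A \<in> null_sets N" by (auto simp: absolutely_continuous_def)
  then show ?thesis by (simp add: measure_def null_setsD1)
qed

lemma Gplus_Gminus_lt_one:
  assumes "prob_space Fp" and "prob_space Fm"
    and sets: "sets Fp = sets borel" "sets Fm = sets borel"
    and "absolutely_continuous Fm Fp" and "absolutely_continuous Fp Fm"
    and "unbounded_signals Fp Fm"
  shows "Gplus Fp Fm x < 1 \<and> Gminus Fp Fm x < 1"
proof -
  define A where "A = {s. x < priv_llr Fp Fm s}"
  have space: "space Fp = UNIV" "space Fm = UNIV"
    using sets by (auto dest: sets_eq_imp_space_eq)
  have meas: "priv_llr Fp Fm \<in> borel_measurable Fp" "priv_llr Fp Fm \<in> borel_measurable Fm"
    using priv_llr_borel_measurable sets by blast+
  then have "A \<in> sets Fp" "A \<in> sets Fm"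
    using pred_const_less[OF meas(1), of x] pred_const_less[OF meas(2), of x]
    by (simp_all add: A_def pred_def space)
  have "0 < measure Fp A + measure Fm A"
    using \<open>unbounded_signals Fp Fm\<close> by (simp add: unbounded_signals_def sig_prob_def A_def)
  then have "measure Fp A > 0 \<and> measure Fm A > 0"
    using finite_measure.measure_null_absolutely_continuous[of Fp Fm A]
      finite_measure.measure_null_absolutely_continuous[of Fm Fp A] assms(1,2,5,6)
      \<open>A \<in> sets Fp\<close> \<open>A \<in> sets Fm\<close>
    by (smt (verit) measure_nonneg prob_space.finite_measure)
  then show ?thesis
    using prob_space.measure_sublevel_lt_one[OF assms(1) meas(1), of x]
      prob_space.measure_sublevel_lt_one[OF assms(2) meas(2), of x]
    by (simp add: Gplus_def Gminus_def A_def space)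
qed

theorem lemma5:
  fixes Fp Fm :: "real measure"
  assumes "prob_space Fp" and "prob_space Fm"
    and "sets Fp = sets borel" and "sets Fm = sets borel"
    and "absolutely_continuous Fm Fp" and "absolutely_continuous Fp Fm"
    and "unbounded_signals Fp Fm"
    and "\<exists>x0::real. convex_on {..<x0} (Gminus Fp Fm) \<and>
                    (\<forall>x<x0. Gminus Fp Fm differentiable at x)"
  shows "\<exists>x1::real. mono_on {x1<..} (\<lambda>x. x + Dplus Fp Fm x)"
proof -
  define P where "P = Gplus Fp Fm"
  define Q where "Q = Gminus Fp Fm"
  have lt_one: "P x < 1" "Q x < 1" for x
    using Gplus_Gminus_lt_one[OF assms(1-7)] by (auto simp: P_def Q_def)
  have "mono P" "mono Q"
    using finite_measure.mono_measure_sublevel priv_llr_borel_measurable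
      prob_space.finite_measure assms(1-4)
    unfolding P_def Q_def Gplus_def[abs_def] Gminus_def[abs_def] by blast+
  have "0 \<le> Q x" for x by (simp add: Q_def Gminus_def)
  obtain x0 where "convex_on {..<x0} Q" using assms(8) by (auto simp: Q_def)
  then obtain x1 where Q_tail: "mono_on {..<x1} (\<lambda>y. y + ln (1 - Q y))"
    using convex_survival_log_mono \<open>mono Q\<close> \<open>\<And>x. 0 \<le> Q x\<close> lt_one(2) by blast
  have Dplus: "Dplus Fp Fm x = ln (1 - P (-x)) - ln (1 - Q (-x))" for x
    using lt_one[of "-x"] by (simp add: Dplus_def ln_div P_def Q_def)
  show ?thesis
  proof (intro exI[of _ "-x1"] mono_onI)
    fix a b assume "a \<in> {-x1<..}" "b \<in> {-x1<..}" "a \<le> b"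
    then have "-b + ln (1 - Q (-b)) \<le> -a + ln (1 - Q (-a))"
      by (intro mono_onD[OF Q_tail]) auto
    moreover have "ln (1 - P (-a)) \<le> ln (1 - P (-b))"
      using \<open>mono P\<close> \<open>a \<le> b\<close> lt_one by (simp add: monoD)
    ultimately show "a + Dplus Fp Fm a \<le> b + Dplus Fp Fm b"
      by (simp add: Dplus)
  qed
qed

end
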